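(* Let $H$ be a hexagonal system and $D\subseteq E(H)$. Then $D$ is an elementary edge cut of $H$ if and only if the edge set $D^{*}$ forms a cycle of the dual graph $H^{*}$ and all end-vertices of edges of $D$ that lie inside this cycle (equivalently, all those that lie outside it) have the same color.
   Context: A hexagonal system (HS) is a finite 2-connected plane graph in which every interior face is a regular hexagon of the hexagonal lattice. Its vertices are properly colored black and white (adjacent vertices get different colors). The dual graph $H^{*}$ has one vertex for each hexagon of $H$ (placed at its center) and one vertex in the exterior face; for each edge $e$ of $H$ there is an edge $e^{*}$ of $H^{*}$ crossing $e$ and joining the vertices of the two faces (hexagons or the exterior face) containing $e$. For $E_0\subseteq E(H)$, $E_0^{*}=\{e^{*}:e\in E_0\}$. For a partition $\{V_1,V_2\}$ of $V(H)$, the set $D$ of edges with one end in $V_1$ and the other in $V_2$ is an edge cut; $D$ is an elementary edge cut (e-cut) if $H-D$ has exactly two components and every edge of $D$ joins a black vertex of one of these components (the black bank) to a white vertex of the other (the white bank). *)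

theory Defs
  imports Main
begin

text \<open>
  Hexagons (cells) of the hexagonal lattice are indexed by the points
  of the triangular lattice, \<open>int \<times> int\<close> (cell (a,b) is centred at a + b\<cdot>e^(i\<pi>/3)).
  Vertices of the hexagonal lattice are the triangles of the triangular lattice:
  (a,b,False) is the "up" triangle {(a,b),(a+1,b),(a,b+1)} and (a,b,True) the
  "down" triangle {(a+1,b),(a,b+1),(a+1,b+1)}; a vertex lies on the boundary of
  exactly the three hexagons of its triangle.  Up triangles are black, down ones white
  (this is a proper 2-colouring of the hexagonal lattice).
  Two vertices are adjacent iff their triangles share two cells; the common two cells
  are the two hexagons on either side of the edge, so the dual edge e* joins them.
\<close>

type_synonym cell = "int \<times> int"
type_synonym vert = "int \<times> int \<times> bool"

definition tri :: "vert \<Rightarrow> cell set" where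
  "tri v = (case v of (a, b, False) \<Rightarrow> {(a, b), (a + 1, b), (a, b + 1)}
                    | (a, b, True) \<Rightarrow> {(a + 1, b), (a, b + 1), (a + 1, b + 1)})"

definition black :: "vert \<Rightarrow> bool" where
  "black v = (\<not> snd (snd v))"

definition lat_adj :: "vert \<Rightarrow> vert \<Rightarrow> bool" where
  "lat_adj u v \<longleftrightarrow> card (tri u \<inter> tri v) = 2"

definition cell_adj :: "cell \<Rightarrow> cell \<Rightarrow> bool" where
  "cell_adj c d \<longleftrightarrow> (fst d - fst c, snd d - snd c) \<in>
      {(1, 0), (-1, 0), (0, 1), (0, -1), (1, -1), (-1, 1)}"

definition hs_verts :: "cell set \<Rightarrow> vert set" where
  "hs_verts S = {v. tri v \<inter> S \<noteq> {}}"

definition hs_edges :: "cell set \<Rightarrow> vert set set" where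
  "hs_edges S = {{u, v} | u v. lat_adj u v \<and> tri u \<inter> tri v \<inter> S \<noteq> {}}"

definition edgerel :: "'a set set \<Rightarrow> ('a \<times> 'a) set" where
  "edgerel E = {(x, y). {x, y} \<in> E}"

definition connected_graph :: "'a set \<Rightarrow> 'a set set \<Rightarrow> bool" where
  "connected_graph V E \<longleftrightarrow> (\<forall>u\<in>V. \<forall>w\<in>V. (u, w) \<in> (edgerel E)\<^sup>*)"

definition two_connected :: "'a set \<Rightarrow> 'a set set \<Rightarrow> bool" where
  "two_connected V E \<longleftrightarrow> finite V \<and> card V \<ge> 3 \<and> connected_graph V E \<and>
     (\<forall>x\<in>V. connected_graph (V - {x}) {e \<in> E. x \<notin> e})"

definition components :: "'a set \<Rightarrow> 'a set set \<Rightarrow> 'a set set" where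
  "components V E = (\<lambda>v. {w \<in> V. (v, w) \<in> (edgerel E)\<^sup>*}) ` V"

text \<open>
  Hexagonal system with hexagon set S: the graph spanned by S is 2-connected and every
  interior face is a hexagon of S, i.e. the hexagons not in S form a connected set
  (no holes; a cell not in S that is enclosed would be an interior face that is either
  not a hexagon or a hexagon that is not one of the hexagons of the system).
\<close>
definition hexagonal_system :: "cell set \<Rightarrow> bool" where
  "hexagonal_system S \<longleftrightarrow> finite S \<and> two_connected (hs_verts S) (hs_edges S) \<and>
     (\<forall>c d. c \<notin> S \<longrightarrow> d \<notin> S \<longrightarrow>
        (c, d) \<in> {(x, y). cell_adj x y \<and> x \<notin> S \<and> y \<notin> S}\<^sup>*)"

definition e_cut :: "cell set \<Rightarrow> vert set set \<Rightarrow> bool" where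
  "e_cut S D \<longleftrightarrow> D \<subseteq> hs_edges S \<and>
     (\<exists>V1 V2. V1 \<union> V2 = hs_verts S \<and> V1 \<inter> V2 = {} \<and> V1 \<noteq> {} \<and> V2 \<noteq> {} \<and>
        D = {e \<in> hs_edges S. e \<inter> V1 \<noteq> {} \<and> e \<inter> V2 \<noteq> {}}) \<and>
     (\<exists>B W. B \<noteq> W \<and> components (hs_verts S) (hs_edges S - D) = {B, W} \<and>
        (\<forall>e\<in>D. \<exists>b w. e = {b, w} \<and> b \<in> B \<and> w \<in> W \<and> black b \<and> \<not> black w))"

text \<open>
  Dual graph H*: vertices are \<open>Some c\<close> for hexagons c \<in> S and \<open>None\<close> for the
  exterior face.
  H* may have parallel edges, so dual edges are identified with the primal edges.
\<close>
definition dual_cells :: "vert set \<Rightarrow> cell set" where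
  "dual_cells e = \<Inter> (tri ` e)"

definition dual_ends :: "cell set \<Rightarrow> vert set \<Rightarrow> cell option set" where
  "dual_ends S e = (\<lambda>c. if c \<in> S then Some c else None) ` dual_cells e"

definition dual_cycle :: "cell set \<Rightarrow> vert set set \<Rightarrow> bool" where
  "dual_cycle S D \<longleftrightarrow> D \<noteq> {} \<and>
     (\<forall>x. card {e \<in> D. x \<in> dual_ends S e} \<in> {0, 2}) \<and>
     (\<forall>e1\<in>D. \<forall>e2\<in>D. (e1, e2) \<in>
        {(e, f). e \<in> D \<and> f \<in> D \<and> dual_ends S e \<inter> dual_ends S f \<noteq> {}}\<^sup>*)"

text \<open>
  Sides of the closed curve D*: a vertex assignment \<open>side\<close> (True = inside, False =
  outside) such that an edge of H crosses the curve (i.e. changes side) exactly when it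
  belongs to D (the curve D* meets H only in the crossings of e* with e, e \<in> D).
\<close>
definition side_function :: "cell set \<Rightarrow> vert set set \<Rightarrow> (vert \<Rightarrow> bool) \<Rightarrow> bool" where
  "side_function S D side \<longleftrightarrow>
     (\<forall>e\<in>hs_edges S. e \<in> D \<longleftrightarrow> (\<exists>u v. e = {u, v} \<and> side u \<noteq> side v))"

end

theory Submission
  imports Defs
begin

(* An edge set D of H is a cut (the set of edges changing side under some 2-colouring of the
   vertices) iff D* is an even subgraph of H*.  A cut meets every hexagon boundary, a 6-cycle, in an
   even number of edges, and the exterior vertex then has even degree by the handshake lemma.
   Conversely, the odd cells outside H can be paired by paths of lattice edges avoiding H; adding
   them makes the set even at every cell of the whole lattice, and such a set is the cut of the
   parity of crossings along horizontal rays.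
   An e-cut has exactly two sides, so every nonempty cut inside it is all of it: D* is a minimal
   nonempty even subgraph, i.e. a cycle.  Conversely, if D* is a cycle, the cut between any
   component of H - D and the rest is a nonempty subset of D, hence all of D, so each side of D is
   connected; the colour condition makes the two sides the black and the white bank. *)

section \<open>Even edge sets of multigraphs\<close>

definition degree :: "('e \<Rightarrow> 'v set) \<Rightarrow> 'e set \<Rightarrow> 'v \<Rightarrow> nat" where
  "degree ends D v = card {e \<in> D. v \<in> ends e}"

definition even_subgraph :: "('e \<Rightarrow> 'v set) \<Rightarrow> 'e set \<Rightarrow> bool" where
  "even_subgraph ends D \<longleftrightarrow> (\<forall>v. even (degree ends D v))"

definition minimal_even :: "('e \<Rightarrow> 'v set) \<Rightarrow> 'e set \<Rightarrow> bool" where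
  "minimal_even ends D \<longleftrightarrow> D \<noteq> {} \<and> even_subgraph ends D \<and>
     (\<forall>D' \<subseteq> D. D' \<noteq> {} \<longrightarrow> even_subgraph ends D' \<longrightarrow> D' = D)"

definition vertex_adjacent :: "('e \<Rightarrow> 'v set) \<Rightarrow> 'e set \<Rightarrow> ('v \<times> 'v) set" where
  "vertex_adjacent ends D = {(a, b). \<exists>e\<in>D. ends e = {a, b}}"

definition edge_adjacent :: "('e \<Rightarrow> 'v set) \<Rightarrow> 'e set \<Rightarrow> ('e \<times> 'e) set" where
  "edge_adjacent ends D = {(e, f). e \<in> D \<and> f \<in> D \<and> ends e \<inter> ends f \<noteq> {}}"

definition is_cycle :: "('e \<Rightarrow> 'v set) \<Rightarrow> 'e set \<Rightarrow> bool" where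
  "is_cycle ends D \<longleftrightarrow> D \<noteq> {} \<and> (\<forall>v. degree ends D v \<in> {0, 2}) \<and>
     (\<forall>e\<in>D. \<forall>f\<in>D. (e, f) \<in> (edge_adjacent ends D)\<^sup>*)"

lemma degree_empty [simp]: "degree ends {} v = 0"
  by (simp add: degree_def)

lemma degree_singleton: "degree ends {e} v = of_bool (v \<in> ends e)"
proof -
  have "{f \<in> {e}. v \<in> ends f} = (if v \<in> ends e then {e} else {})" by auto
  then show ?thesis by (simp add: degree_def)
qed

lemma degree_Un_disjoint:
  assumes "finite A" "finite B" "A \<inter> B = {}"
  shows "degree ends (A \<union> B) v = degree ends A v + degree ends B v"
proof -
  have "{e \<in> A \<union> B. v \<in> ends e} = {e \<in> A. v \<in> ends e} \<union> {e \<in> B. v \<in> ends e}" by blast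
  then show ?thesis
    unfolding degree_def using assms by (simp add: card_Un_disjoint disjoint_iff)
qed

lemma card_sym_diff:
  assumes "finite A" "finite B"
  shows "card (sym_diff A B) + 2 * card (A \<inter> B) = card A + card B"
proof -
  have "A \<union> B = sym_diff A B \<union> (A \<inter> B)" by blast
  then have "card (A \<union> B) = card (sym_diff A B) + card (A \<inter> B)"
    using assms by (simp add: card_Un_disjoint disjoint_iff)
  then show ?thesis using card_Un_Int[OF assms] by simp
qed

lemma degree_sym_diff:
  assumes "finite A" "finite B"
  shows "odd (degree ends (sym_diff A B) v) \<longleftrightarrow> odd (degree ends A v) \<noteq> odd (degree ends B v)"
proof -
  let ?A = "{e \<in> A. v \<in> ends e}" and ?B = "{e \<in> B. v \<in> ends e}"
  have "{e \<in> sym_diff A B. v \<in> ends e} = sym_diff ?A ?B" by blast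
  then have "degree ends (sym_diff A B) v + 2 * card (?A \<inter> ?B) = degree ends A v + degree ends B v"
    unfolding degree_def using card_sym_diff[of ?A ?B] assms by simp
  then have "even (degree ends (sym_diff A B) v + 2 * card (?A \<inter> ?B))
      \<longleftrightarrow> even (degree ends A v + degree ends B v)"
    by (rule arg_cong)
  then show ?thesis by simp
qed

lemma sum_degree:
  assumes "finite D" "finite V"
  shows "(\<Sum>v\<in>V. degree ends D v) = (\<Sum>e\<in>D. card (ends e \<inter> V))"
proof -
  have "(\<Sum>v\<in>V. degree ends D v) = (\<Sum>v\<in>V. \<Sum>e\<in>D. of_bool (v \<in> ends e))"
    unfolding degree_def using assms(1) by (simp add: Collect_conj_eq Int_commute)
  also have "\<dots> = (\<Sum>e\<in>D. \<Sum>v\<in>V. of_bool (v \<in> ends e))" by (rule sum.swap)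
  also have "\<dots> = (\<Sum>e\<in>D. card (ends e \<inter> V))"
    using assms(2) by (simp add: Collect_mem_eq Int_commute)
  finally show ?thesis .
qed

lemma vertex_adjacent_sym: "(a, b) \<in> vertex_adjacent ends D \<Longrightarrow> (b, a) \<in> vertex_adjacent ends D"
  unfolding vertex_adjacent_def by (auto simp: insert_commute)

lemma rtrancl_vertex_adjacent_sym:
  "(a, b) \<in> (vertex_adjacent ends D)\<^sup>* \<Longrightarrow> (b, a) \<in> (vertex_adjacent ends D)\<^sup>*"
  by (induction rule: rtrancl_induct)
    (auto intro: converse_rtrancl_into_rtrancl vertex_adjacent_sym)

lemma odd_degrees_walk:
  assumes "(r, w) \<in> (vertex_adjacent ends D)\<^sup>*"
  shows "\<exists>T \<subseteq> D. finite T \<and> (\<forall>v. odd (degree ends T v) \<longleftrightarrow> (v = r) \<noteq> (v = w))"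
  using assms
proof (induction rule: rtrancl_induct)
  case base
  show ?case by (intro exI[of _ "{}"]) simp
next
  case (step y z)
  obtain T where T: "T \<subseteq> D" "finite T" "\<forall>v. odd (degree ends T v) \<longleftrightarrow> (v = r) \<noteq> (v = y)"
    using step.IH by (elim exE conjE)
  obtain f where f: "f \<in> D" "ends f = {y, z}"
    using step.hyps(2) unfolding vertex_adjacent_def by blast
  show ?case
  proof (cases "y = z")
    case True
    then show ?thesis using T by (intro exI[of _ T]) simp
  next
    case False
    have "odd (degree ends (sym_diff T {f}) v) \<longleftrightarrow> (v = r) \<noteq> (v = z)" for v
      using degree_sym_diff[OF T(2), of "{f}" ends v] T(3) f(2) False
      by (simp add: degree_singleton)
    moreover have "sym_diff T {f} \<subseteq> D" using T(1) f(1) by blast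
    moreover have "finite (sym_diff T {f})" using T(2) by blast
    ultimately show ?thesis by (intro exI[of _ "sym_diff T {f}"]) simp
  qed
qed

lemma odd_degrees_pairing:
  assumes conn: "\<forall>x\<in>X. \<forall>y\<in>X. (x, y) \<in> (vertex_adjacent ends D)\<^sup>*"
  shows "finite Z \<Longrightarrow> Z \<subseteq> X \<Longrightarrow> even (card Z) \<Longrightarrow>
    \<exists>T \<subseteq> D. finite T \<and> (\<forall>v. odd (degree ends T v) \<longleftrightarrow> v \<in> Z)"
proof (induction "card Z" arbitrary: Z rule: less_induct)
  case less
  show ?case
  proof (cases "Z = {}")
    case True
    then show ?thesis by (intro exI[of _ "{}"]) simp
  next
    case False
    then have "card Z \<noteq> 0" using less.prems(1) by simp
    with less.prems(3) have "card Z \<ge> 2" by presburger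
    then obtain A where "A \<subseteq> Z" "card A = 2" by (rule obtain_subset_with_card_n)
    then obtain x y where xy: "x \<in> Z" "y \<in> Z" "x \<noteq> y" by (auto simp: card_2_iff)
    let ?Z = "Z - {x, y}"
    have card: "card ?Z + 2 = card Z"
      using xy less.prems(1) \<open>card Z \<ge> 2\<close> by (simp add: card_Diff_subset)
    have "card ?Z < card Z" "finite ?Z" "?Z \<subseteq> X" using card less.prems by auto
    moreover have "even (card ?Z)" using less.prems(3) unfolding card[symmetric] by simp
    ultimately
    have "\<exists>T \<subseteq> D. finite T \<and> (\<forall>v. odd (degree ends T v) \<longleftrightarrow> v \<in> ?Z)"
      by (rule less.hyps)
    then obtain T1 where T1: "T1 \<subseteq> D" "finite T1" "\<forall>v. odd (degree ends T1 v) \<longleftrightarrow> v \<in> ?Z"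
      by blast
    have "(x, y) \<in> (vertex_adjacent ends D)\<^sup>*" using conn xy less.prems(2) by blast
    from odd_degrees_walk[OF this] obtain T2 where
      T2: "T2 \<subseteq> D" "finite T2" "\<forall>v. odd (degree ends T2 v) \<longleftrightarrow> (v = x) \<noteq> (v = y)"
      by (elim exE conjE)
    have "odd (degree ends (sym_diff T1 T2) v) \<longleftrightarrow> v \<in> Z" for v
    proof -
      have "odd (degree ends (sym_diff T1 T2) v) \<longleftrightarrow> (v \<in> ?Z) \<noteq> ((v = x) \<noteq> (v = y))"
        using degree_sym_diff[OF T1(2) T2(2), of ends v] T1(3) T2(3) by simp
      then show ?thesis using xy by (cases "v = x"; cases "v = y") auto
    qed
    moreover have "sym_diff T1 T2 \<subseteq> D" using T1(1) T2(1) by blast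
    moreover have "finite (sym_diff T1 T2)" using T1(2) T2(2) by blast
    ultimately show ?thesis by (intro exI[of _ "sym_diff T1 T2"]) simp
  qed
qed

definition vertex_closed :: "('e \<Rightarrow> 'v set) \<Rightarrow> 'e set \<Rightarrow> 'v set \<Rightarrow> bool" where
  "vertex_closed ends D R \<longleftrightarrow> (\<forall>e\<in>D. ends e \<inter> R \<noteq> {} \<longrightarrow> ends e \<subseteq> R)"

lemma reachable_vertex_closed:
  assumes "\<forall>e\<in>D. card (ends e) = 2"
  shows "vertex_closed ends D {w. (r, w) \<in> (vertex_adjacent ends D)\<^sup>*}"
  unfolding vertex_closed_def
proof (intro ballI impI)
  fix e assume e: "e \<in> D" "ends e \<inter> {w. (r, w) \<in> (vertex_adjacent ends D)\<^sup>*} \<noteq> {}"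
  obtain a b where ab: "ends e = {a, b}" using assms e(1) by (meson card_2_iff)
  then have "(a, b) \<in> vertex_adjacent ends D" "(b, a) \<in> vertex_adjacent ends D"
    using e(1) unfolding vertex_adjacent_def by (auto simp: insert_commute)
  with e(2) show "ends e \<subseteq> {w. (r, w) \<in> (vertex_adjacent ends D)\<^sup>*}"
    unfolding ab by (auto intro: rtrancl_into_rtrancl)
qed

lemma degree_touching_closed:
  assumes "vertex_closed ends D R"
  shows "degree ends {e \<in> D. ends e \<inter> R \<noteq> {}} v = (if v \<in> R then degree ends D v else 0)"
proof -
  have "{e \<in> {e \<in> D. ends e \<inter> R \<noteq> {}}. v \<in> ends e} =
      (if v \<in> R then {e \<in> D. v \<in> ends e} else {})"
    using assms unfolding vertex_closed_def by auto
  then show ?thesis unfolding degree_def by (simp only: if_distrib[of card] card.empty)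
qed

text \<open>A vertex x of degree at least 4 in a minimal even set D, with edges e1 = {x, y1} and
  e2 = {x, y2}, is impossible: a path from x to some y_i avoiding e1 and e2 would close up with e_i
  to a smaller even set, and otherwise the edges around y1 and y2 together with e1 and e2 would.\<close>

lemma minimal_even_two_edges_disconnect:
  assumes min: "minimal_even ends D" and "finite D"
    and e: "e \<in> D" "ends e = {x, y}" "x \<noteq> y" and f: "f \<in> D" "f \<noteq> e"
  shows "(x, y) \<notin> (vertex_adjacent ends (D - {e, f}))\<^sup>*"
proof
  assume "(x, y) \<in> (vertex_adjacent ends (D - {e, f}))\<^sup>*"
  from odd_degrees_walk[OF this] obtain T where
    T: "T \<subseteq> D - {e, f}" "finite T" "\<forall>v. odd (degree ends T v) \<longleftrightarrow> (v = x) \<noteq> (v = y)"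
    by (elim exE conjE)
  have "degree ends ({e} \<union> T) v = of_bool (v \<in> ends e) + degree ends T v" for v
    using T(1,2) by (subst degree_Un_disjoint) (auto simp: degree_singleton)
  then have "even_subgraph ends ({e} \<union> T)"
    unfolding even_subgraph_def using T(3) e(2,3) by auto
  moreover have "{e} \<union> T \<subseteq> D" using T(1) e(1) by blast
  ultimately have "{e} \<union> T = D" using min unfolding minimal_even_def by blast
  then show False using T(1) f by blast
qed

lemma even_subgraph_closed_part_plus_wedge:
  assumes ev: "even_subgraph ends (D0 \<union> {e1, e2})" and fin: "finite D0"
    and new: "e1 \<notin> D0" "e2 \<notin> D0" "e1 \<noteq> e2"
    and ends: "ends e1 = {x, y1}" "ends e2 = {x, y2}"
    and closed: "vertex_closed ends D0 R" and R: "y1 \<in> R" "y2 \<in> R" "x \<notin> R"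
  shows "even_subgraph ends ({e \<in> D0. ends e \<inter> R \<noteq> {}} \<union> {e1, e2})"
  unfolding even_subgraph_def
proof
  fix v
  have split: "degree ends (A \<union> {e1, e2}) v = degree ends A v + degree ends {e1, e2} v"
    if "A \<subseteq> D0" for A
    using that fin new by (intro degree_Un_disjoint) (auto intro: finite_subset)
  show "even (degree ends ({e \<in> D0. ends e \<inter> R \<noteq> {}} \<union> {e1, e2}) v)"
  proof (cases "v \<in> R")
    case True
    then show ?thesis
      using ev[unfolded even_subgraph_def, rule_format, of v] split[of D0]
        split[of "{e \<in> D0. ends e \<inter> R \<noteq> {}}"] degree_touching_closed[OF closed, of v]
      by simp
  next
    case False
    then have "{e \<in> {e1, e2}. v \<in> ends e} = (if v = x then {e1, e2} else {})"
      using R ends by auto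
    then have "degree ends {e1, e2} v = (if v = x then 2 else 0)"
      using new(3) by (simp add: degree_def)
    with False show ?thesis
      using split[of "{e \<in> D0. ends e \<inter> R \<noteq> {}}"]
      unfolding degree_touching_closed[OF closed] by simp
  qed
qed

lemma minimal_even_edges_at_cut_vertex:
  assumes min: "minimal_even ends D" and fin: "finite D" and two: "\<forall>e\<in>D. card (ends e) = 2"
    and e1: "e1 \<in> D" "ends e1 = {x, y1}" and e2: "e2 \<in> D" "ends e2 = {x, y2}" "e2 \<noteq> e1"
    and sep: "(y1, x) \<notin> (vertex_adjacent ends (D - {e1, e2}))\<^sup>*"
      "(y2, x) \<notin> (vertex_adjacent ends (D - {e1, e2}))\<^sup>*"
    and e3: "e3 \<in> D" "x \<in> ends e3"
  shows "e3 \<in> {e1, e2}"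
proof (rule ccontr)
  assume e3_new: "e3 \<notin> {e1, e2}"
  define D0 where "D0 = D - {e1, e2}"
  define R where "R = {w. (y1, w) \<in> (vertex_adjacent ends D0)\<^sup>*} \<union>
    {w. (y2, w) \<in> (vertex_adjacent ends D0)\<^sup>*}"
  have two0: "\<forall>e\<in>D0. card (ends e) = 2" using two unfolding D0_def by blast
  have closed: "vertex_closed ends D0 R"
    using reachable_vertex_closed[OF two0, of y1] reachable_vertex_closed[OF two0, of y2]
    unfolding R_def vertex_closed_def by blast
  have R: "y1 \<in> R" "y2 \<in> R" "x \<notin> R" using sep unfolding R_def D0_def by auto
  have "D0 \<union> {e1, e2} = D" using e1 e2 unfolding D0_def by blast
  then have "even_subgraph ends (D0 \<union> {e1, e2})" using min unfolding minimal_even_def by simp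
  moreover have "finite D0" "e1 \<notin> D0" "e2 \<notin> D0" "e1 \<noteq> e2"
    using fin e2(3) unfolding D0_def by auto
  ultimately have "even_subgraph ends ({e \<in> D0. ends e \<inter> R \<noteq> {}} \<union> {e1, e2})"
    using even_subgraph_closed_part_plus_wedge[OF _ _ _ _ _ e1(2) e2(2) closed R] by blast
  moreover have "{e \<in> D0. ends e \<inter> R \<noteq> {}} \<union> {e1, e2} \<subseteq> D" unfolding D0_def using e1 e2 by auto
  ultimately have "{e \<in> D0. ends e \<inter> R \<noteq> {}} \<union> {e1, e2} = D"
    using min unfolding minimal_even_def by blast
  with e3(1) e3_new have "e3 \<in> D0" "ends e3 \<inter> R \<noteq> {}" unfolding D0_def by blast+
  with closed e3(2) R(3) show False unfolding vertex_closed_def by blast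
qed

lemma card_2_otherE:
  assumes "card A = 2" "x \<in> A"
  obtains y where "A = {x, y}" "x \<noteq> y"
  using assms by (metis card_2_iff insert_commute insert_iff singletonD)

lemma minimal_even_degree:
  assumes min: "minimal_even ends D" and fin: "finite D" and two: "\<forall>e\<in>D. card (ends e) = 2"
  shows "degree ends D x \<in> {0, 2}"
proof (rule ccontr)
  assume deg: "degree ends D x \<notin> {0, 2}"
  have "even (degree ends D x)" using min unfolding minimal_even_def even_subgraph_def by blast
  moreover have "degree ends D x \<noteq> 0" "degree ends D x \<noteq> 2" using deg by auto
  ultimately have "3 \<le> card {e \<in> D. x \<in> ends e}" unfolding degree_def by presburger
  then obtain A where "A \<subseteq> {e \<in> D. x \<in> ends e}" "card A = 3"
    by (rule obtain_subset_with_card_n)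
  then obtain e1 e2 e3 where e: "e1 \<in> D" "e2 \<in> D" "e3 \<in> D" "x \<in> ends e1" "x \<in> ends e2"
    "x \<in> ends e3" "e2 \<noteq> e1" "e3 \<noteq> e1" "e3 \<noteq> e2"
    by (auto simp: card_3_iff)
  obtain y1 where y1: "ends e1 = {x, y1}" "x \<noteq> y1"
    using two e by (meson card_2_otherE)
  obtain y2 where y2: "ends e2 = {x, y2}" "x \<noteq> y2"
    using two e by (meson card_2_otherE)
  have "(x, y1) \<notin> (vertex_adjacent ends (D - {e1, e2}))\<^sup>*"
    using minimal_even_two_edges_disconnect[OF min fin e(1) y1 e(2,7)] .
  moreover have "(x, y2) \<notin> (vertex_adjacent ends (D - {e1, e2}))\<^sup>*"
    using minimal_even_two_edges_disconnect[OF min fin e(2) y2 e(1)] e(7)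
    by (simp add: insert_commute)
  ultimately have "e3 \<in> {e1, e2}"
    using minimal_even_edges_at_cut_vertex[OF min fin two e(1) y1(1) e(2) y2(1) e(7) _ _ e(3,6)]
    by (blast intro: rtrancl_vertex_adjacent_sym)
  with e show False by blast
qed

lemma minimal_even_connected:
  assumes min: "minimal_even ends D" and e: "e \<in> D" and f: "f \<in> D"
  shows "(e, f) \<in> (edge_adjacent ends D)\<^sup>*"
proof -
  define C where "C = {g \<in> D. (e, g) \<in> (edge_adjacent ends D)\<^sup>*}"
  have "degree ends C v = 0 \<or> degree ends C v = degree ends D v" for v
  proof (cases "\<exists>g\<in>C. v \<in> ends g")
    case True
    then obtain g where g: "g \<in> C" "v \<in> ends g" by blast
    have "h \<in> C" if h: "h \<in> D" "v \<in> ends h" for h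
    proof -
      have "(g, h) \<in> edge_adjacent ends D" using g h unfolding C_def edge_adjacent_def by blast
      moreover have "(e, g) \<in> (edge_adjacent ends D)\<^sup>*" using g(1) unfolding C_def by blast
      ultimately have "(e, h) \<in> (edge_adjacent ends D)\<^sup>*" by (rule rtrancl_into_rtrancl[rotated])
      with h(1) show ?thesis unfolding C_def by blast
    qed
    then have "{g \<in> C. v \<in> ends g} = {g \<in> D. v \<in> ends g}" unfolding C_def by blast
    then show ?thesis unfolding degree_def by simp
  next
    case False
    then have "{g \<in> C. v \<in> ends g} = {}" by blast
    then show ?thesis unfolding degree_def by (simp only: card.empty simp_thms)
  qed
  then have "even_subgraph ends C"
    using min unfolding minimal_even_def even_subgraph_def by (metis even_zero)
  moreover have "C \<subseteq> D" "C \<noteq> {}" using e unfolding C_def by auto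
  ultimately have "C = D" using min unfolding minimal_even_def by blast
  with f show ?thesis unfolding C_def by blast
qed

lemma cycle_even_subset_eq:
  assumes cyc: "is_cycle ends D" and fin: "finite D"
    and sub: "D' \<subseteq> D" "D' \<noteq> {}" and ev: "even_subgraph ends D'"
  shows "D' = D"
proof -
  obtain e where e: "e \<in> D'" using sub(2) by blast
  have "g \<in> D'" if "(e, g) \<in> (edge_adjacent ends D)\<^sup>*" for g
    using that
  proof (induction rule: rtrancl_induct)
    case (step f g)
    then obtain v where v: "v \<in> ends f" "v \<in> ends g" "g \<in> D"
      unfolding edge_adjacent_def by blast
    let ?A = "{h \<in> D'. v \<in> ends h}" and ?B = "{h \<in> D. v \<in> ends h}"
    have AB: "?A \<subseteq> ?B" "finite ?B" using sub(1) fin by auto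
    have fA: "f \<in> ?A" using step.IH v(1) by blast
    have "card ?B \<noteq> 0" using fA AB by auto
    moreover have "card ?B \<in> {0, 2}" using cyc unfolding is_cycle_def degree_def by blast
    ultimately have "card ?B = 2" by auto
    moreover have "finite ?A" using AB by (rule finite_subset)
    then have "card ?A \<noteq> 0" using fA by auto
    moreover have "even (card ?A)" using ev unfolding even_subgraph_def degree_def by blast
    moreover have "card ?A \<le> card ?B" using AB by (intro card_mono)
    ultimately have "card ?A = card ?B" by presburger
    then have "?A = ?B" using AB by (intro card_subset_eq)
    with v show ?case by blast
  qed (rule e)
  then have "D \<subseteq> D'" using cyc e sub(1) unfolding is_cycle_def by blast
  with sub(1) show ?thesis by blast
qed

theorem is_cycle_iff_minimal_even:
  assumes "finite D" "\<forall>e\<in>D. card (ends e) = 2"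
  shows "is_cycle ends D \<longleftrightarrow> minimal_even ends D"
proof
  assume cyc: "is_cycle ends D"
  then have "degree ends D v \<in> {0, 2}" for v unfolding is_cycle_def by blast
  then have "even_subgraph ends D"
    unfolding even_subgraph_def by (metis empty_iff even_numeral even_zero insert_iff)
  moreover have "D \<noteq> {}" using cyc unfolding is_cycle_def by blast
  ultimately show "minimal_even ends D"
    unfolding minimal_even_def using cycle_even_subset_eq[OF cyc assms(1)] by blast
next
  assume "minimal_even ends D"
  then show "is_cycle ends D"
    unfolding is_cycle_def
    using minimal_even_degree minimal_even_connected assms minimal_even_def by metis
qed

section \<open>Cuts and components of graphs with two-element edges\<close>

definition cut_edges :: "'a set set \<Rightarrow> ('a \<Rightarrow> bool) \<Rightarrow> 'a set set" where
  "cut_edges E side = {e \<in> E. \<exists>u v. e = {u, v} \<and> side u \<noteq> side v}"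

lemma cut_edges_subset: "cut_edges E side \<subseteq> E"
  unfolding cut_edges_def by blast

lemma ex_doubleton_iff: "(\<exists>u' v'. {u, v} = {u', v'} \<and> f u' \<noteq> f v') \<longleftrightarrow> f u \<noteq> f v"
  by (auto simp: doubleton_eq_iff)

lemma doubleton_in_cut_edges_iff:
  "{x, y} \<in> cut_edges E side \<longleftrightarrow> {x, y} \<in> E \<and> side x \<noteq> side y"
  unfolding cut_edges_def mem_Collect_eq ex_doubleton_iff ..

lemma cut_edgesE:
  assumes "e \<in> cut_edges E side"
  obtains a b where "e = {a, b}" "e \<in> E" "side a" "\<not> side b"
proof -
  obtain u v where uv: "e = {u, v}" "e \<in> E" "side u \<noteq> side v"
    using assms unfolding cut_edges_def by blast
  show thesis
  proof (cases "side u")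
    case True
    with uv show thesis by (intro that[of u v]) auto
  next
    case False
    with uv show thesis by (intro that[of v u]) (auto simp: insert_commute)
  qed
qed

lemma cut_edges_restrict: "E' \<subseteq> E \<Longrightarrow> cut_edges E' side = cut_edges E side \<inter> E'"
  unfolding cut_edges_def by blast

definition component_of :: "'a set set \<Rightarrow> 'a set \<Rightarrow> 'a \<Rightarrow> 'a set" where
  "component_of E V v = {w \<in> V. (v, w) \<in> (edgerel E)\<^sup>*}"

lemma components_eq_image: "components V E = component_of E V ` V"
  unfolding components_def component_of_def ..

lemma edgerel_sym: "(x, y) \<in> edgerel E \<Longrightarrow> (y, x) \<in> edgerel E"
  unfolding edgerel_def by (simp add: insert_commute)

lemma rtrancl_edgerel_sym: "(x, y) \<in> (edgerel E)\<^sup>* \<Longrightarrow> (y, x) \<in> (edgerel E)\<^sup>*"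
  by (induction rule: rtrancl_induct) (auto intro: converse_rtrancl_into_rtrancl edgerel_sym)

lemma mem_component_of_self: "v \<in> V \<Longrightarrow> v \<in> component_of E V v"
  unfolding component_of_def by simp

lemma component_of_eq:
  assumes "w \<in> component_of E V v"
  shows "component_of E V w = component_of E V v"
proof -
  have vw: "(v, w) \<in> (edgerel E)\<^sup>*" using assms unfolding component_of_def by blast
  then have wv: "(w, v) \<in> (edgerel E)\<^sup>*" by (rule rtrancl_edgerel_sym)
  show ?thesis unfolding component_of_def using rtrancl_trans[OF vw] rtrancl_trans[OF wv] by blast
qed

lemma component_of_closed:
  assumes "w \<in> component_of E V v" "{w, x} \<in> E" "x \<in> V"
  shows "x \<in> component_of E V v"
proof -
  have "(w, x) \<in> edgerel E" using assms(2) unfolding edgerel_def by simp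
  with assms(1,3) show ?thesis unfolding component_of_def by (auto intro: rtrancl_into_rtrancl)
qed

lemma components_disjoint:
  assumes "X \<in> components V E" "Y \<in> components V E" "X \<noteq> Y"
  shows "X \<inter> Y = {}"
proof (rule ccontr)
  assume "X \<inter> Y \<noteq> {}"
  then obtain z where z: "z \<in> X" "z \<in> Y" by blast
  obtain x y where xy: "X = component_of E V x" "Y = component_of E V y"
    using assms(1,2) unfolding components_eq_image by blast
  have "X = component_of E V z" using z(1) component_of_eq unfolding xy by metis
  moreover have "Y = component_of E V z" using z(2) component_of_eq unfolding xy by metis
  ultimately show False using assms(3) by simp
qed

lemma exists_crossing_edge:
  assumes "(v, w) \<in> (edgerel E)\<^sup>*" "v \<in> X" "w \<notin> X"
  shows "\<exists>a b. {a, b} \<in> E \<and> a \<in> X \<and> b \<notin> X"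
  using assms
proof (induction rule: rtrancl_induct)
  case (step y z)
  then show ?case by (cases "y \<in> X") (auto simp: edgerel_def)
qed simp

lemma side_constant_along_uncut_edges:
  assumes "(v, w) \<in> (edgerel E')\<^sup>*" "E' \<subseteq> E - cut_edges E side"
  shows "side v = side w"
  using assms
  by (induction rule: rtrancl_induct) (auto simp: edgerel_def doubleton_in_cut_edges_iff)

lemma constant_on_component:
  assumes "X \<in> components V E'" "x \<in> X" "y \<in> X" "E' \<subseteq> E - cut_edges E side"
  shows "side x = side y"
proof -
  obtain v where "X = component_of E' V v" using assms(1) unfolding components_eq_image by blast
  then have "(v, x) \<in> (edgerel E')\<^sup>*" "(v, y) \<in> (edgerel E')\<^sup>*"
    using assms(2,3) unfolding component_of_def by blast+
  then have "side v = side x" "side v = side y"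
    using side_constant_along_uncut_edges[OF _ assms(4)] by blast+
  then show ?thesis by simp
qed

lemma cut_edges_component_subset:
  assumes "\<forall>e\<in>E. e \<subseteq> V"
  shows "cut_edges E (\<lambda>w. w \<in> component_of (E - D) V u) \<subseteq> D"
proof
  let ?K = "component_of (E - D) V u"
  fix e assume "e \<in> cut_edges E (\<lambda>w. w \<in> ?K)"
  then obtain a b where e: "e = {a, b}" "e \<in> E" "a \<in> ?K" "b \<notin> ?K" by (rule cut_edgesE)
  show "e \<in> D"
  proof (rule ccontr)
    assume "e \<notin> D"
    then have "{a, b} \<in> E - D" using e(1,2) by simp
    moreover have "b \<in> V" using assms e(1,2) by blast
    ultimately have "b \<in> ?K" by (rule component_of_closed[OF e(3)])
    with e(4) show False ..
  qed
qed

lemma cut_edges_across_two_components: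
  assumes X: "X \<in> components V (E - D)" and Y: "Y \<in> components V (E - D)"
    and across: "\<forall>e\<in>D. \<exists>x y. e = {x, y} \<and> x \<in> X \<and> y \<in> Y" and "D \<subseteq> E"
    and sub: "cut_edges E q \<subseteq> D" and ne: "cut_edges E q \<noteq> {}"
  shows "cut_edges E q = D"
proof -
  have uncut: "E - D \<subseteq> E - cut_edges E q" using sub by blast
  obtain e' where e': "e' \<in> cut_edges E q" using ne by blast
  then have "e' \<in> D" using sub by blast
  then obtain x y where xy: "e' = {x, y}" "x \<in> X" "y \<in> Y" using across by blast
  have "q x \<noteq> q y" using e' unfolding xy(1) by (simp add: doubleton_in_cut_edges_iff)
  have "e \<in> cut_edges E q" if eD: "e \<in> D" for e
  proof -
    obtain x' y' where e: "e = {x', y'}" "x' \<in> X" "y' \<in> Y" using across eD by blast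
    have "q x' = q x" "q y' = q y"
      using constant_on_component[OF X e(2) xy(2) uncut]
        constant_on_component[OF Y e(3) xy(3) uncut] .
    with \<open>q x \<noteq> q y\<close> \<open>D \<subseteq> E\<close> eD show ?thesis unfolding e(1)
      by (auto simp: doubleton_in_cut_edges_iff)
  qed
  with sub show ?thesis by blast
qed

section \<open>The hexagonal lattice\<close>

definition d_edge :: "int \<Rightarrow> int \<Rightarrow> vert set" where
  "d_edge b j = {(j, b, False), (j, b, True)}"

definition v_edge :: "int \<Rightarrow> int \<Rightarrow> vert set" where
  "v_edge b j = {(j - 1, b, True), (j, b, False)}"

definition h_edge :: "int \<Rightarrow> int \<Rightarrow> vert set" where
  "h_edge b j = {(j, b, False), (j, b - 1, True)}"

definition lattice_edges :: "vert set set" where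
  "lattice_edges = range (case_prod d_edge) \<union> range (case_prod v_edge) \<union> range (case_prod h_edge)"

lemma d_edge_lattice [simp]: "d_edge b j \<in> lattice_edges"
  and v_edge_lattice [simp]: "v_edge b j \<in> lattice_edges"
  and h_edge_lattice [simp]: "h_edge b j \<in> lattice_edges"
  unfolding lattice_edges_def by (auto intro!: rev_image_eqI[of "(b, j)"])

lemma lattice_edgesE:
  assumes "e \<in> lattice_edges"
  obtains (d) b j where "e = d_edge b j" | (v) b j where "e = v_edge b j"
    | (h) b j where "e = h_edge b j"
  using assms unfolding lattice_edges_def by auto

lemma dual_cells_d_edge: "dual_cells (d_edge b j) = {(j + 1, b), (j, b + 1)}"
  and dual_cells_v_edge: "dual_cells (v_edge b j) = {(j, b), (j, b + 1)}"
  and dual_cells_h_edge: "dual_cells (h_edge b j) = {(j, b), (j + 1, b)}"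
  by (auto simp: dual_cells_def d_edge_def v_edge_def h_edge_def tri_def)

lemma dual_cells_lattice_edge:
  assumes "e \<in> lattice_edges"
  obtains c d where "dual_cells e = {c, d}" "c \<noteq> d"
  using assms
  by (cases rule: lattice_edgesE) (auto simp: dual_cells_d_edge dual_cells_v_edge dual_cells_h_edge)

lemma lattice_edge_black_white:
  assumes "e \<in> lattice_edges"
  obtains u v where "e = {u, v}" "black u" "\<not> black v"
  using assms
proof (cases rule: lattice_edgesE)
  case (d b j)
  then show thesis using that[of "(j, b, False)" "(j, b, True)"] by (simp add: d_edge_def black_def)
next
  case (v b j)
  then show thesis using that[of "(j, b, False)" "(j - 1, b, True)"]
    by (simp add: v_edge_def black_def insert_commute)
next
  case (h b j)
  then show thesis using that[of "(j, b, False)" "(j, b - 1, True)"]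
    by (simp add: h_edge_def black_def)
qed

lemma card_tri: "card (tri v) = 3"
  by (cases v) (auto simp: tri_def split: bool.split)

lemma tri_pair_determines_vertex:
  assumes "x \<noteq> y" "x \<in> tri (a, b, s)" "y \<in> tri (a, b, s)"
    "x \<in> tri (a', b', s)" "y \<in> tri (a', b', s)"
  shows "(a, b) = (a', b')"
proof (cases s)
  case True
  with assms show ?thesis unfolding tri_def by simp (elim disjE; simp)
next
  case False
  with assms show ?thesis unfolding tri_def by simp (elim disjE; simp)
qed

lemma tri_pair_up_down:
  assumes "x \<noteq> y" "x \<in> tri (a, b, True)" "y \<in> tri (a, b, True)"
    "x \<in> tri (a', b', False)" "y \<in> tri (a', b', False)"
  shows "{(a, b, True), (a', b', False)} \<in> lattice_edges"
proof -
  have "(a', b') \<in> {(a, b), (a + 1, b), (a, b + 1)}"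
    using assms unfolding tri_def by simp (elim disjE; simp)
  then have "{(a, b, True), (a', b', False)} \<in> {d_edge b a, v_edge b (a + 1), h_edge (b + 1) a}"
    by (auto simp: d_edge_def v_edge_def h_edge_def)
  then show ?thesis by auto
qed

lemma lat_adj_iff_lattice_edge: "lat_adj u v \<longleftrightarrow> {u, v} \<in> lattice_edges"
proof
  assume "lat_adj u v"
  then obtain x y where xy: "tri u \<inter> tri v = {x, y}" "x \<noteq> y"
    unfolding lat_adj_def by (auto simp: card_2_iff)
  have "u \<noteq> v" using xy card_tri[of u] by auto
  obtain a b s a' b' t where uv: "u = (a, b, s)" "v = (a', b', t)" by (metis prod_cases3)
  have sub: "x \<in> tri u" "y \<in> tri u" "x \<in> tri v" "y \<in> tri v" using xy(1) by auto
  show "{u, v} \<in> lattice_edges"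
  proof (cases "s = t")
    case True
    then show ?thesis using tri_pair_determines_vertex[OF xy(2)] sub uv \<open>u \<noteq> v\<close> by auto
  next
    case False
    show ?thesis
    proof (cases s)
      case True
      with False show ?thesis using tri_pair_up_down[OF xy(2)] sub uv by simp
    next
      case s: False
      with False have "{v, u} \<in> lattice_edges" using tri_pair_up_down[OF xy(2)] sub uv by simp
      then show ?thesis by (simp add: insert_commute)
    qed
  qed
next
  assume "{u, v} \<in> lattice_edges"
  then obtain c d where "dual_cells {u, v} = {c, d}" "c \<noteq> d" by (rule dual_cells_lattice_edge)
  then show "lat_adj u v" unfolding lat_adj_def dual_cells_def by simp
qed

text \<open>The six boundary edges of hexagon (a, b), in cyclic order.\<close>

definition hexagon_edges :: "int \<Rightarrow> int \<Rightarrow> vert set list" where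
  "hexagon_edges a b =
     [d_edge b (a - 1), v_edge b a, h_edge b a,
      d_edge (b - 1) a, v_edge (b - 1) a, h_edge b (a - 1)]"

lemma distinct_hexagon_edges: "distinct (hexagon_edges a b)"
  by (simp add: hexagon_edges_def d_edge_def v_edge_def h_edge_def doubleton_eq_iff)

lemma hexagon_edges_lattice: "set (hexagon_edges a b) \<subseteq> lattice_edges"
  by (simp add: hexagon_edges_def)

lemma cell_in_dual_cells_iff:
  assumes "e \<in> lattice_edges"
  shows "(a, b) \<in> dual_cells e \<longleftrightarrow> e \<in> set (hexagon_edges a b)"
proof
  assume "(a, b) \<in> dual_cells e"
  with assms show "e \<in> set (hexagon_edges a b)"
    by (cases rule: lattice_edgesE)
      (auto simp: hexagon_edges_def dual_cells_d_edge dual_cells_v_edge dual_cells_h_edge)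
next
  assume "e \<in> set (hexagon_edges a b)"
  then show "(a, b) \<in> dual_cells e"
    by (auto simp: hexagon_edges_def dual_cells_d_edge dual_cells_v_edge dual_cells_h_edge)
qed

lemma degree_cell:
  assumes "F \<subseteq> lattice_edges"
  shows "degree dual_cells F (a, b) = (\<Sum>e\<leftarrow>hexagon_edges a b. of_bool (e \<in> F))"
proof -
  have "{e \<in> F. (a, b) \<in> dual_cells e} = set (hexagon_edges a b) \<inter> {e. e \<in> F}"
    using cell_in_dual_cells_iff assms by blast
  then show ?thesis
    unfolding degree_def by (simp add: sum_list_distinct_conv_sum_set[OF distinct_hexagon_edges])
qed

lemma cell_adj_lattice_edge:
  assumes "cell_adj c d"
  shows "\<exists>e\<in>lattice_edges. dual_cells e = {c, d}"
proof -
  obtain a b a' b' where cd: "c = (a, b)" "d = (a', b')" by fastforce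
  have "(a' - a, b' - b) \<in> {(1, 0), (-1, 0), (0, 1), (0, -1), (1, -1), (-1, 1)}"
    using assms unfolding cell_adj_def cd by simp
  then consider "a' = a + 1" "b' = b" | "a' = a - 1" "b' = b" | "a' = a" "b' = b + 1"
    | "a' = a" "b' = b - 1" | "a' = a + 1" "b' = b - 1" | "a' = a - 1" "b' = b + 1"
    by auto
  then show ?thesis
  proof cases
    case 1
    then show ?thesis by (intro bexI[of _ "h_edge b a"]) (auto simp: cd dual_cells_h_edge)
  next
    case 2
    then show ?thesis by (intro bexI[of _ "h_edge b (a - 1)"]) (auto simp: cd dual_cells_h_edge)
  next
    case 3
    then show ?thesis by (intro bexI[of _ "v_edge b a"]) (auto simp: cd dual_cells_v_edge)
  next
    case 4
    then show ?thesis by (intro bexI[of _ "v_edge (b - 1) a"]) (auto simp: cd dual_cells_v_edge)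
  next
    case 5
    then show ?thesis by (intro bexI[of _ "d_edge (b - 1) a"]) (auto simp: cd dual_cells_d_edge)
  next
    case 6
    then show ?thesis by (intro bexI[of _ "d_edge b (a - 1)"]) (auto simp: cd dual_cells_d_edge)
  qed
qed

section \<open>Even sets of lattice edges are cuts\<close>

definition ray_count :: "(int \<Rightarrow> vert set) \<Rightarrow> vert set set \<Rightarrow> int \<Rightarrow> nat" where
  "ray_count edge F a = card {j. a \<le> j \<and> edge j \<in> F}"

lemma ray_count_step:
  assumes "finite F" "inj edge"
  shows "ray_count edge F a = of_bool (edge a \<in> F) + ray_count edge F (a + 1)"
proof -
  have "finite {j. a + 1 \<le> j \<and> edge j \<in> F}"
    using finite_vimageI[OF assms] by (rule rev_finite_subset) auto
  moreover have "a \<le> j \<longleftrightarrow> j = a \<or> a + 1 \<le> j" for j by auto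
  then have "{j. a \<le> j \<and> edge j \<in> F} =
      (if edge a \<in> F then insert a else id) {j. a + 1 \<le> j \<and> edge j \<in> F}"
    by auto
  ultimately show ?thesis unfolding ray_count_def by simp
qed

lemma ray_count_beyond_bound:
  assumes "\<forall>e\<in>F. \<forall>v\<in>e. fst v < M" "\<And>j. (j, b, False) \<in> edge j" "M \<le> a"
  shows "ray_count edge F a = 0"
proof -
  have "{j. a \<le> j \<and> edge j \<in> F} = {}" using assms by fastforce
  then show ?thesis unfolding ray_count_def by (simp only: card.empty)
qed

lemma lattice_edges_bounded:
  assumes "finite F" "F \<subseteq> lattice_edges"
  obtains M where "\<forall>e\<in>F. \<forall>v\<in>e. fst v < M"
proof
  have "finite e" if "e \<in> F" for e
    using that assms(2) by (blast elim: lattice_edge_black_white)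
  then have "finite (fst ` \<Union>F)" using assms(1) by blast
  then show "\<forall>e\<in>F. \<forall>v\<in>e. fst v < Max (insert 0 (fst ` \<Union>F)) + 1"
    by (auto simp: Max_ge_iff)
qed

lemma inj_d_edge: "inj (d_edge b)"
  and inj_v_edge: "inj (v_edge b)"
  by (auto simp: inj_def d_edge_def v_edge_def doubleton_eq_iff)

text \<open>The vertices of row b, ordered by their first coordinate with up before down, form a zigzag
  path of d- and v-edges; \<open>ray_side F v\<close> is the parity of the number of F-edges on this path to
  the right of v.\<close>

definition ray_side :: "vert set set \<Rightarrow> vert \<Rightarrow> bool" where
  "ray_side F v = (case v of (a, b, s) \<Rightarrow>
     odd (ray_count (d_edge b) F (a + of_bool s) + ray_count (v_edge b) F (a + 1)))"

lemma d_edge_in_iff_ray_side: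
  "finite F \<Longrightarrow> d_edge b j \<in> F \<longleftrightarrow> ray_side F (j, b, False) \<noteq> ray_side F (j, b, True)"
  unfolding ray_side_def using ray_count_step[OF _ inj_d_edge, of F b j] by auto

lemma v_edge_in_iff_ray_side:
  "finite F \<Longrightarrow> v_edge b j \<in> F \<longleftrightarrow> ray_side F (j - 1, b, True) \<noteq> ray_side F (j, b, False)"
  unfolding ray_side_def using ray_count_step[OF _ inj_v_edge, of F b j] by auto

lemma h_edge_in_iff_ray_side:
  assumes fin: "finite F" and lat: "F \<subseteq> lattice_edges" and ev: "\<forall>c. even (degree dual_cells F c)"
  shows "h_edge b k \<in> F \<longleftrightarrow> ray_side F (k, b, False) \<noteq> ray_side F (k, b - 1, True)"
proof -
  \<comment> \<open>Moving k one step to the left adds the boundary of hexagon (k + 1, b) to the edges counted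
    by G, so G k is even by downward induction from beyond all edges of F.\<close>
  define G where "G k = of_bool (h_edge b k \<in> F) +
      ray_count (d_edge b) F k + ray_count (v_edge b) F (k + 1) +
      ray_count (d_edge (b - 1)) F (k + 1) + ray_count (v_edge (b - 1)) F (k + 1)" for k
  have step: "even (G (k + 1)) \<Longrightarrow> even (G k)" for k
  proof -
    have "G k + 2 * of_bool (h_edge b (k + 1) \<in> F) = degree dual_cells F (k + 1, b) + G (k + 1)"
      unfolding G_def degree_cell[OF lat] hexagon_edges_def
      using ray_count_step[OF fin inj_d_edge, of b k]
        ray_count_step[OF fin inj_v_edge, of b "k + 1"]
        ray_count_step[OF fin inj_d_edge, of "b - 1" "k + 1"]
        ray_count_step[OF fin inj_v_edge, of "b - 1" "k + 1"]
      by simp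
    moreover assume "even (G (k + 1))"
    ultimately show "even (G k)" using ev by (metis dvd_add_left_iff even_mult_iff even_numeral)
  qed
  obtain M where M: "\<forall>e\<in>F. \<forall>v\<in>e. fst v < M" using lattice_edges_bounded[OF fin lat] .
  have "G k = 0" if "M \<le> k" for k
  proof -
    have "h_edge b k \<notin> F" using M that by (fastforce simp: h_edge_def)
    then show ?thesis unfolding G_def using that
      by (simp add: ray_count_beyond_bound[OF M] d_edge_def v_edge_def)
  qed
  then have "even (G k)"
    using step int_le_induct[of k "max k M" "\<lambda>k. even (G k)"] by (simp add: le_max_iff_disj)
  then show ?thesis unfolding G_def ray_side_def by (cases "h_edge b k \<in> F") auto
qed

theorem even_lattice_set_is_cut:
  assumes "finite F" "F \<subseteq> lattice_edges" "\<forall>c. even (degree dual_cells F c)"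
  shows "cut_edges lattice_edges (ray_side F) = F"
proof -
  have "e \<in> F \<longleftrightarrow> e \<in> cut_edges lattice_edges (ray_side F)" if "e \<in> lattice_edges" for e
    using that
  proof (cases rule: lattice_edgesE)
    case (d b j)
    then show ?thesis
      using d_edge_in_iff_ray_side[OF assms(1)] that
      by (simp add: d_edge_def doubleton_in_cut_edges_iff)
  next
    case (v b j)
    then show ?thesis
      using v_edge_in_iff_ray_side[OF assms(1)] that
      by (simp add: v_edge_def doubleton_in_cut_edges_iff)
  next
    case (h b j)
    then show ?thesis
      using h_edge_in_iff_ray_side[OF assms] that
      by (simp add: h_edge_def doubleton_in_cut_edges_iff)
  qed
  then show ?thesis using assms(2) unfolding cut_edges_def by blast
qed

section \<open>Cuts of a hexagonal system and even subgraphs of its dual\<close>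

lemma hexagonal_system_finite_verts: "hexagonal_system S \<Longrightarrow> finite (hs_verts S)"
  unfolding hexagonal_system_def two_connected_def by blast

lemma hexagonal_system_connected: "hexagonal_system S \<Longrightarrow> connected_graph (hs_verts S) (hs_edges S)"
  unfolding hexagonal_system_def two_connected_def by blast

lemma side_function_iff_cut_edges:
  "D \<subseteq> hs_edges S \<Longrightarrow> side_function S D side \<longleftrightarrow> cut_edges (hs_edges S) side = D"
  unfolding side_function_def cut_edges_def by blast

lemma dual_cycle_iff_is_cycle: "dual_cycle S D \<longleftrightarrow> is_cycle (dual_ends S) D"
  unfolding dual_cycle_def is_cycle_def degree_def edge_adjacent_def ..

lemma hs_edges_iff: "e \<in> hs_edges S \<longleftrightarrow> e \<in> lattice_edges \<and> dual_cells e \<inter> S \<noteq> {}"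
proof
  assume "e \<in> hs_edges S"
  then show "e \<in> lattice_edges \<and> dual_cells e \<inter> S \<noteq> {}"
    unfolding hs_edges_def dual_cells_def by (auto simp: lat_adj_iff_lattice_edge)
next
  assume e: "e \<in> lattice_edges \<and> dual_cells e \<inter> S \<noteq> {}"
  then obtain u v where uv: "e = {u, v}" by (metis lattice_edge_black_white)
  with e have "lat_adj u v" "tri u \<inter> tri v \<inter> S \<noteq> {}"
    by (auto simp: lat_adj_iff_lattice_edge dual_cells_def)
  then show "e \<in> hs_edges S" unfolding hs_edges_def uv by blast
qed

lemma hs_edges_lattice: "hs_edges S \<subseteq> lattice_edges"
  using hs_edges_iff by blast

lemma hs_edge_subset_verts: "e \<in> hs_edges S \<Longrightarrow> e \<subseteq> hs_verts S"
  unfolding hs_edges_def hs_verts_def by auto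

lemma finite_hs_edges: "finite (hs_verts S) \<Longrightarrow> finite (hs_edges S)"
  by (rule finite_subset[of _ "Pow (hs_verts S)"]) (auto dest: hs_edge_subset_verts)

lemma finite_hs_edges_subset: "hexagonal_system S \<Longrightarrow> D \<subseteq> hs_edges S \<Longrightarrow> finite D"
  using finite_hs_edges[OF hexagonal_system_finite_verts] finite_subset by blast

lemma hs_edge_black_white:
  assumes "e \<in> hs_edges S" "e = {x, y}"
  shows "black x \<noteq> black y"
  using assms hs_edges_lattice lattice_edge_black_white by (metis doubleton_eq_iff subsetD)

lemma hs_edge_dual_cells:
  assumes "e \<in> hs_edges S"
  obtains c d where "dual_cells e = {c, d}" "c \<noteq> d" "c \<in> S"
proof -
  have "e \<in> lattice_edges" using assms hs_edges_lattice by blast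
  then obtain c d where cd: "dual_cells e = {c, d}" "c \<noteq> d" by (rule dual_cells_lattice_edge)
  moreover have "c \<in> S \<or> d \<in> S" using assms cd(1) unfolding hs_edges_iff by auto
  ultimately show thesis using that by (metis insert_commute)
qed

lemma card_dual_cells: "e \<in> hs_edges S \<Longrightarrow> card (dual_cells e) = 2"
  by (erule hs_edge_dual_cells) simp

lemma card_dual_ends:
  assumes "e \<in> hs_edges S"
  shows "card (dual_ends S e) = 2"
proof -
  obtain c d where cd: "dual_cells e = {c, d}" "c \<noteq> d" "c \<in> S"
    using assms by (rule hs_edge_dual_cells)
  then have "dual_ends S e = {Some c, if d \<in> S then Some d else None}"
    unfolding dual_ends_def by simp
  then show ?thesis using cd(2) by simp
qed

lemma card_dual_cells_outside:
  "e \<in> hs_edges S \<Longrightarrow> card (dual_cells e - S) = of_bool (None \<in> dual_ends S e)"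
  by (erule hs_edge_dual_cells) (auto simp: dual_ends_def insert_Diff_if)

lemma degree_dual_ends_Some:
  "degree (dual_ends S) D (Some c) = (if c \<in> S then degree dual_cells D c else 0)"
proof -
  have "{e \<in> D. Some c \<in> dual_ends S e} = (if c \<in> S then {e \<in> D. c \<in> dual_cells e} else {})"
    unfolding dual_ends_def by auto
  then show ?thesis unfolding degree_def by simp
qed

lemma degree_dual_ends_None:
  assumes "finite D" "D \<subseteq> hs_edges S" "finite N" "\<Union>(dual_cells ` D) \<subseteq> N"
  shows "degree (dual_ends S) D None = (\<Sum>c\<in>N - S. degree dual_cells D c)"
proof -
  have "(\<Sum>c\<in>N - S. degree dual_cells D c) = (\<Sum>e\<in>D. card (dual_cells e \<inter> (N - S)))"
    using assms(1,3) by (intro sum_degree) auto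
  also have "\<dots> = (\<Sum>e\<in>D. of_bool (None \<in> dual_ends S e))"
  proof (rule sum.cong)
    fix e assume "e \<in> D"
    then have "dual_cells e \<inter> (N - S) = dual_cells e - S" "e \<in> hs_edges S" using assms(2,4) by auto
    then show "card (dual_cells e \<inter> (N - S)) = of_bool (None \<in> dual_ends S e)"
      by (simp add: card_dual_cells_outside)
  qed simp
  also have "\<dots> = degree (dual_ends S) D None"
    using assms(1) by (simp add: degree_def Collect_conj_eq Int_commute)
  finally show ?thesis by simp
qed

lemma finite_dual_cells_Union:
  "finite D \<Longrightarrow> D \<subseteq> hs_edges S \<Longrightarrow> finite (\<Union>(dual_cells ` D))"
  by (auto elim!: hs_edge_dual_cells)

lemma even_dual_iff_even_at_hexagons:
  assumes fin: "finite D" and D: "D \<subseteq> hs_edges S"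
  shows "even_subgraph (dual_ends S) D \<longleftrightarrow> (\<forall>c\<in>S. even (degree dual_cells D c))"
proof -
  let ?N = "\<Union>(dual_cells ` D)"
  have finN: "finite ?N" using finite_dual_cells_Union[OF fin D] .
  have "(\<Sum>c\<in>?N. degree dual_cells D c) = (\<Sum>e\<in>D. card (dual_cells e))"
    using sum_degree[OF fin finN, of dual_cells] by (simp add: Int_absorb2 Sup_upper)
  also have "\<dots> = (\<Sum>e\<in>D. 2)" using D by (intro sum.cong) (auto simp: card_dual_cells)
  also have "\<dots> = 2 * card D" by simp
  finally have "(\<Sum>c\<in>?N \<inter> S. degree dual_cells D c) + degree (dual_ends S) D None = 2 * card D"
    using degree_dual_ends_None[OF fin D finN subset_refl]
      sum.Int_Diff[OF finN, of "degree dual_cells D" S]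
    by linarith
  then have "(\<forall>c\<in>S. even (degree dual_cells D c)) \<Longrightarrow> even (degree (dual_ends S) D None)"
    by (metis Int_iff dvd_add_right_iff dvd_sum dvd_triv_left)
  then show ?thesis
    unfolding even_subgraph_def by (metis degree_dual_ends_Some not_Some_eq even_zero)
qed

lemma even_changes_around_hexagon:
  fixes p0 p1 p2 p3 p4 p5 :: bool
  shows "even (of_bool (p0 \<noteq> p1) + of_bool (p1 \<noteq> p2) + of_bool (p2 \<noteq> p3) +
    of_bool (p4 \<noteq> p3) + of_bool (p5 \<noteq> p4) + of_bool (p0 \<noteq> p5) :: nat)"
  by (cases p0; cases p1; cases p2; cases p3; cases p4; cases p5) simp_all

lemma hexagon_edges_hs_edges: "(a, b) \<in> S \<Longrightarrow> set (hexagon_edges a b) \<subseteq> hs_edges S"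
  using cell_in_dual_cells_iff hexagon_edges_lattice hs_edges_iff by blast

lemma cut_edges_even_at_hexagon:
  assumes "c \<in> S"
  shows "even (degree dual_cells (cut_edges (hs_edges S) p) c)"
proof -
  obtain a b where c: "c = (a, b)" by fastforce
  have sub: "set (hexagon_edges a b) \<subseteq> hs_edges S"
    using assms c by (intro hexagon_edges_hs_edges) simp
  have "cut_edges (hs_edges S) p \<subseteq> lattice_edges"
    using cut_edges_subset hs_edges_lattice by blast
  then have "degree dual_cells (cut_edges (hs_edges S) p) (a, b) =
      (\<Sum>e\<leftarrow>hexagon_edges a b. of_bool (e \<in> cut_edges (hs_edges S) p))"
    by (rule degree_cell)
  also have "\<dots> =
      of_bool (p (a - 1, b, False) \<noteq> p (a - 1, b, True)) +
      of_bool (p (a - 1, b, True) \<noteq> p (a, b, False)) +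
      of_bool (p (a, b, False) \<noteq> p (a, b - 1, True)) +
      of_bool (p (a, b - 1, False) \<noteq> p (a, b - 1, True)) +
      of_bool (p (a - 1, b - 1, True) \<noteq> p (a, b - 1, False)) +
      of_bool (p (a - 1, b, False) \<noteq> p (a - 1, b - 1, True))"
    using sub by (simp only: hexagon_edges_def d_edge_def v_edge_def h_edge_def list.map list.set
        sum_list_simps insert_subset doubleton_in_cut_edges_iff simp_thms add.assoc add_0_right)
  finally show ?thesis unfolding c by (simp only: even_changes_around_hexagon)
qed

lemma cut_edges_even_dual:
  assumes "finite (hs_verts S)"
  shows "even_subgraph (dual_ends S) (cut_edges (hs_edges S) p)"
proof -
  have sub: "cut_edges (hs_edges S) p \<subseteq> hs_edges S" by (rule cut_edges_subset)
  then have "finite (cut_edges (hs_edges S) p)"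
    using finite_hs_edges[OF assms] by (rule finite_subset)
  then show ?thesis
    using even_dual_iff_even_at_hexagons[OF _ sub] cut_edges_even_at_hexagon by blast
qed

lemma cut_edges_nonempty:
  assumes hs: "hexagonal_system S" and xy: "x \<in> hs_verts S" "y \<in> hs_verts S" "side x \<noteq> side y"
  shows "cut_edges (hs_edges S) side \<noteq> {}"
proof -
  define X where "X = {v. side v = side x}"
  have "(x, y) \<in> (edgerel (hs_edges S))\<^sup>*"
    using hexagonal_system_connected[OF hs] xy(1,2) unfolding connected_graph_def by blast
  moreover have "x \<in> X" "y \<notin> X" using xy(3) unfolding X_def by simp_all
  ultimately obtain a b where "{a, b} \<in> hs_edges S" "a \<in> X" "b \<notin> X"
    by (metis exists_crossing_edge)
  then have "{a, b} \<in> cut_edges (hs_edges S) side"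
    unfolding X_def by (simp add: doubleton_in_cut_edges_iff)
  then show ?thesis by blast
qed

definition outer_edges :: "cell set \<Rightarrow> vert set set" where
  "outer_edges S = {e \<in> lattice_edges. dual_cells e \<inter> S = {}}"

lemma outer_cells_linked:
  assumes "hexagonal_system S" "c \<notin> S" "d \<notin> S"
  shows "(c, d) \<in> (vertex_adjacent dual_cells (outer_edges S))\<^sup>*"
proof -
  have "{(x, y). cell_adj x y \<and> x \<notin> S \<and> y \<notin> S} \<subseteq> vertex_adjacent dual_cells (outer_edges S)"
    using cell_adj_lattice_edge unfolding vertex_adjacent_def outer_edges_def by fastforce
  moreover have "(c, d) \<in> {(x, y). cell_adj x y \<and> x \<notin> S \<and> y \<notin> S}\<^sup>*"
    using assms unfolding hexagonal_system_def by blast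
  ultimately show ?thesis using rtrancl_mono by blast
qed

lemma odd_outer_cells:
  assumes fin: "finite D" and D: "D \<subseteq> hs_edges S" and ev: "even_subgraph (dual_ends S) D"
  shows "finite {c. c \<notin> S \<and> odd (degree dual_cells D c)}"
    and "even (card {c. c \<notin> S \<and> odd (degree dual_cells D c)})"
proof -
  define N where "N = \<Union>(dual_cells ` D)"
  have finN: "finite N" unfolding N_def using finite_dual_cells_Union[OF fin D] .
  have "c \<in> N" if "odd (degree dual_cells D c)" for c
  proof (rule ccontr)
    assume "c \<notin> N"
    then have "{e \<in> D. c \<in> dual_cells e} = {}" unfolding N_def by blast
    with that show False unfolding degree_def by simp
  qed
  then have Z: "{c. c \<notin> S \<and> odd (degree dual_cells D c)} = {c \<in> N - S. odd (degree dual_cells D c)}"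
    by blast
  then show "finite {c. c \<notin> S \<and> odd (degree dual_cells D c)}" using finN by simp
  have "degree (dual_ends S) D None = (\<Sum>c\<in>N - S. degree dual_cells D c)"
    using degree_dual_ends_None[OF fin D finN] unfolding N_def by blast
  moreover have "even (degree (dual_ends S) D None)" using ev unfolding even_subgraph_def by blast
  ultimately have "even (\<Sum>c\<in>N - S. degree dual_cells D c)" by simp
  then show "even (card {c. c \<notin> S \<and> odd (degree dual_cells D c)})"
    unfolding Z using finN by (simp add: even_sum_iff)
qed

text \<open>J joins the odd cells of D outside S in pairs by paths of lattice edges avoiding S.\<close>

lemma outer_completion:
  assumes hs: "hexagonal_system S" and fin: "finite D" and D: "D \<subseteq> hs_edges S"
    and ev: "even_subgraph (dual_ends S) D"
  obtains J where "J \<subseteq> outer_edges S" "finite J" "\<forall>c. even (degree dual_cells (D \<union> J) c)"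
proof -
  define Z where "Z = {c. c \<notin> S \<and> odd (degree dual_cells D c)}"
  have conn: "\<forall>c\<in>- S. \<forall>d\<in>- S. (c, d) \<in> (vertex_adjacent dual_cells (outer_edges S))\<^sup>*"
    using outer_cells_linked[OF hs] by blast
  have Z: "finite Z" "even (card Z)" unfolding Z_def using odd_outer_cells[OF fin D ev] .
  have "Z \<subseteq> - S" unfolding Z_def by blast
  from odd_degrees_pairing[OF conn Z(1) this Z(2)] obtain J where
    J: "J \<subseteq> outer_edges S" "finite J" "\<forall>c. odd (degree dual_cells J c) \<longleftrightarrow> c \<in> Z"
    by (elim exE conjE)
  have disj: "D \<inter> J = {}" using D J(1) hs_edges_iff unfolding outer_edges_def by blast
  have "even (degree dual_cells D c + degree dual_cells J c)" for c
  proof (cases "c \<in> S")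
    case True
    then have "{e \<in> J. c \<in> dual_cells e} = {}" using J(1) unfolding outer_edges_def by blast
    then have "degree dual_cells J c = 0" unfolding degree_def by (simp only: card.empty)
    moreover have "even (degree (dual_ends S) D (Some c))" using ev unfolding even_subgraph_def ..
    then have "even (degree dual_cells D c)" using True by (simp add: degree_dual_ends_Some)
    ultimately show ?thesis by simp
  next
    case False
    then have "odd (degree dual_cells J c) \<longleftrightarrow> odd (degree dual_cells D c)"
      using J(3) unfolding Z_def by blast
    then show ?thesis by simp
  qed
  then have "\<forall>c. even (degree dual_cells (D \<union> J) c)"
    by (simp only: degree_Un_disjoint[OF fin J(2) disj] simp_thms)
  with J(1,2) show thesis by (rule that)
qed

theorem even_dual_set_is_cut:
  assumes hs: "hexagonal_system S" and D: "D \<subseteq> hs_edges S"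
    and ev: "even_subgraph (dual_ends S) D"
  obtains side where "cut_edges (hs_edges S) side = D"
proof -
  have fin: "finite D" using finite_hs_edges_subset[OF hs D] .
  obtain J where J: "J \<subseteq> outer_edges S" "finite J" "\<forall>c. even (degree dual_cells (D \<union> J) c)"
    by (rule outer_completion[OF hs fin D ev])
  have "finite (D \<union> J)" using fin J(2) by blast
  moreover have "D \<union> J \<subseteq> lattice_edges"
    using D J(1) hs_edges_lattice unfolding outer_edges_def by blast
  ultimately have "cut_edges lattice_edges (ray_side (D \<union> J)) = D \<union> J"
    using J(3) by (rule even_lattice_set_is_cut)
  then have "cut_edges (hs_edges S) (ray_side (D \<union> J)) = (D \<union> J) \<inter> hs_edges S"
    using cut_edges_restrict[OF hs_edges_lattice] by simp
  also have "\<dots> = D"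
    using D J(1) hs_edges_iff unfolding outer_edges_def by blast
  finally have "cut_edges (hs_edges S) (ray_side (D \<union> J)) = D" .
  then show thesis by (rule that)
qed

section \<open>Elementary edge cuts\<close>

lemma cut_edges_of_component:
  assumes hs: "hexagonal_system S" and cut: "cut_edges (hs_edges S) p = D"
    and cyc: "is_cycle (dual_ends S) D" and u: "u \<in> hs_verts S"
  shows "cut_edges (hs_edges S) (\<lambda>w. w \<in> component_of (hs_edges S - D) (hs_verts S) u) = D"
proof -
  let ?V = "hs_verts S" and ?E = "hs_edges S"
  let ?K = "component_of (?E - D) ?V u"
  have D: "D \<subseteq> ?E" using cut_edges_subset cut by blast
  have "cut_edges ?E (\<lambda>w. w \<in> ?K) \<subseteq> D"
    using hs_edge_subset_verts by (intro cut_edges_component_subset) blast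
  moreover have "cut_edges ?E (\<lambda>w. w \<in> ?K) \<noteq> {}"
  proof -
    obtain e0 where "e0 \<in> D" using cyc unfolding is_cycle_def by blast
    then have "e0 \<in> cut_edges ?E p" using cut by simp
    then obtain x0 y0 where xy: "e0 = {x0, y0}" "e0 \<in> ?E" "p x0" "\<not> p y0"
      by (rule cut_edgesE)
    define z where "z = (if p u then y0 else x0)"
    have z: "z \<in> ?V" using hs_edge_subset_verts xy(1,2) unfolding z_def by auto
    have uncut: "?E - D \<subseteq> ?E - cut_edges ?E p" using cut by simp
    have "z \<notin> ?K"
    proof
      assume "z \<in> ?K"
      then have "(u, z) \<in> (edgerel (?E - D))\<^sup>*" unfolding component_of_def by blast
      from side_constant_along_uncut_edges[OF this uncut] xy(3,4) show False
        unfolding z_def by (cases "p u") simp_all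
    qed
    then show ?thesis using cut_edges_nonempty[OF hs u z] mem_component_of_self[OF u] by simp
  qed
  moreover have "even_subgraph (dual_ends S) (cut_edges ?E (\<lambda>w. w \<in> ?K))"
    by (rule cut_edges_even_dual[OF hexagonal_system_finite_verts[OF hs]])
  ultimately show ?thesis by (rule cycle_even_subset_eq[OF cyc finite_hs_edges_subset[OF hs D]])
qed

lemma component_eq_side:
  assumes hs: "hexagonal_system S" and cut: "cut_edges (hs_edges S) p = D"
    and cyc: "is_cycle (dual_ends S) D" and v: "v \<in> hs_verts S"
  shows "component_of (hs_edges S - D) (hs_verts S) v = {w \<in> hs_verts S. p w = p v}"
proof -
  let ?V = "hs_verts S" and ?E = "hs_edges S"
  let ?K = "component_of (?E - D) ?V"
  have uncut: "?E - D \<subseteq> ?E - cut_edges ?E p" using cut by simp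
  have K_side: "?K u \<subseteq> {w \<in> ?V. p w = p u}" for u
    unfolding component_of_def using side_constant_along_uncut_edges[OF _ uncut] by fastforce
  obtain e0 where "e0 \<in> D" using cyc unfolding is_cycle_def by blast
  then have "e0 \<in> cut_edges ?E p" using cut by simp
  then obtain x0 y0 where xy: "e0 = {x0, y0}" "p x0" "\<not> p y0"
    by (rule cut_edgesE)
  define z where "z = (if p v then x0 else y0)"
  have z: "z \<in> ?K u" if "u \<in> ?V" "p u = p v" for u
  proof -
    have "e0 \<in> cut_edges ?E (\<lambda>w. w \<in> ?K u)"
      using cut_edges_of_component[OF hs cut cyc that(1)] \<open>e0 \<in> D\<close> by blast
    then have "(x0 \<in> ?K u) \<noteq> (y0 \<in> ?K u)"
      unfolding xy(1) doubleton_in_cut_edges_iff by blast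
    then show ?thesis using K_side[of u] xy(2,3) that(2) unfolding z_def by auto
  qed
  show ?thesis
  proof
    show "?K v \<subseteq> {w \<in> ?V. p w = p v}" by (rule K_side)
    show "{w \<in> ?V. p w = p v} \<subseteq> ?K v"
    proof
      fix w assume w: "w \<in> {w \<in> ?V. p w = p v}"
      then have "?K z = ?K w" "?K z = ?K v" using z v by (simp_all add: component_of_eq)
      then show "w \<in> ?K v" using w mem_component_of_self by (metis mem_Collect_eq)
    qed
  qed
qed

lemma components_eq_sides:
  assumes hs: "hexagonal_system S" and cut: "cut_edges (hs_edges S) p = D"
    and cyc: "is_cycle (dual_ends S) D"
    and sides: "x \<in> hs_verts S" "p x = b" "y \<in> hs_verts S" "p y \<noteq> b"
  shows "components (hs_verts S) (hs_edges S - D) =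
    {{w \<in> hs_verts S. p w = b}, {w \<in> hs_verts S. p w \<noteq> b}}"
proof -
  let ?V = "hs_verts S" and ?E = "hs_edges S"
  have comp: "component_of (?E - D) ?V v =
      (if p v = b then {w \<in> ?V. p w = b} else {w \<in> ?V. p w \<noteq> b})" if "v \<in> ?V" for v
    using component_eq_side[OF hs cut cyc that] by auto
  show ?thesis unfolding components_eq_image
  proof (intro equalityI subsetI)
    fix X assume "X \<in> component_of (?E - D) ?V ` ?V"
    then show "X \<in> {{w \<in> ?V. p w = b}, {w \<in> ?V. p w \<noteq> b}}" using comp by auto
  next
    fix X assume "X \<in> {{w \<in> ?V. p w = b}, {w \<in> ?V. p w \<noteq> b}}"
    then have "X = component_of (?E - D) ?V x \<or> X = component_of (?E - D) ?V y"
      using comp sides by auto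
    then show "X \<in> component_of (?E - D) ?V ` ?V" using sides by blast
  qed
qed

lemma cut_edges_eq_between:
  "cut_edges (hs_edges S) p =
    {e \<in> hs_edges S. e \<inter> {w \<in> hs_verts S. p w = b} \<noteq> {} \<and> e \<inter> {w \<in> hs_verts S. p w \<noteq> b} \<noteq> {}}"
proof -
  have "(\<exists>u v. e = {u, v} \<and> p u \<noteq> p v) \<longleftrightarrow>
      e \<inter> {w \<in> hs_verts S. p w = b} \<noteq> {} \<and> e \<inter> {w \<in> hs_verts S. p w \<noteq> b} \<noteq> {}"
    if e: "e \<in> hs_edges S" for e
  proof -
    obtain u v where uv: "e = {u, v}" using e unfolding hs_edges_def by blast
    have "u \<in> hs_verts S" "v \<in> hs_verts S" using e hs_edge_subset_verts uv by blast+
    then show ?thesis unfolding uv ex_doubleton_iff by (cases "p u"; cases "p v"; cases b) auto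
  qed
  then show ?thesis unfolding cut_edges_def by blast
qed

lemma cut_edge_black_end:
  assumes cut: "cut_edges (hs_edges S) p = D" and col: "\<forall>u\<in>\<Union>D. p u \<longrightarrow> black u = b"
    and e: "e \<in> D"
  shows "\<exists>x y. e = {x, y} \<and> x \<in> hs_verts S \<and> y \<in> hs_verts S \<and> p x = b \<and> p y \<noteq> b \<and>
    black x \<and> \<not> black y"
proof -
  have "e \<in> cut_edges (hs_edges S) p" using e cut by simp
  then obtain x y where xy: "e = {x, y}" "e \<in> hs_edges S" "p x" "\<not> p y" by (rule cut_edgesE)
  have V: "x \<in> hs_verts S" "y \<in> hs_verts S" using hs_edge_subset_verts xy(1,2) by blast+
  have "black x = b" using col e xy(1,3) by blast
  moreover have "black x \<noteq> black y" by (rule hs_edge_black_white[OF xy(2,1)])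
  ultimately have colour: "black x = b" "black y \<noteq> b" by auto
  show ?thesis
  proof (cases b)
    case True
    with V xy(1,3,4) colour show ?thesis by (intro exI[of _ x] exI[of _ y]) simp
  next
    case False
    with V xy(1,3,4) colour show ?thesis
      by (intro exI[of _ y] exI[of _ x]) (simp add: insert_commute)
  qed
qed

lemma e_cut_intro:
  assumes hs: "hexagonal_system S" and cut: "cut_edges (hs_edges S) p = D"
    and cyc: "is_cycle (dual_ends S) D"
    and col: "\<forall>u\<in>\<Union>D. \<forall>v\<in>\<Union>D. p u \<longrightarrow> p v \<longrightarrow> black u = black v"
  shows "e_cut S D"
proof -
  let ?V = "hs_verts S" and ?E = "hs_edges S"
  obtain e0 where "e0 \<in> D" using cyc unfolding is_cycle_def by blast
  then have "e0 \<in> cut_edges ?E p" using cut by simp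
  then obtain x0 y0 where xy: "e0 = {x0, y0}" "e0 \<in> ?E" "p x0" "\<not> p y0" by (rule cut_edgesE)
  have V0: "x0 \<in> ?V" "y0 \<in> ?V" using hs_edge_subset_verts xy(1,2) by blast+
  define b where "b = black x0"
  have col_b: "\<forall>u\<in>\<Union>D. p u \<longrightarrow> black u = b"
    using col \<open>e0 \<in> D\<close> xy(1,3) unfolding b_def by blast
  define B W where "B = {w \<in> ?V. p w = b}" and "W = {w \<in> ?V. p w \<noteq> b}"
  have "\<exists>x\<in>?V. p x = b" "\<exists>y\<in>?V. p y \<noteq> b" using xy(3,4) V0 by (cases b; blast)+
  then obtain x y where sides: "x \<in> ?V" "p x = b" "y \<in> ?V" "p y \<noteq> b" by blast
  have comps: "components ?V (?E - D) = {B, W}"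
    unfolding B_def W_def by (rule components_eq_sides[OF hs cut cyc sides])
  have part: "B \<union> W = ?V" "B \<inter> W = {}" unfolding B_def W_def by auto
  have ne: "B \<noteq> {}" "W \<noteq> {}" unfolding B_def W_def using sides by blast+
  have between: "D = {e \<in> ?E. e \<inter> B \<noteq> {} \<and> e \<inter> W \<noteq> {}}"
    unfolding cut[symmetric] B_def W_def by (rule cut_edges_eq_between)
  have colours: "\<exists>b' w. e = {b', w} \<and> b' \<in> B \<and> w \<in> W \<and> black b' \<and> \<not> black w"
    if "e \<in> D" for e
    using cut_edge_black_end[OF cut col_b that] unfolding B_def W_def by blast
  show ?thesis unfolding e_cut_def
  proof (intro conjI)
    show "D \<subseteq> ?E" using cut_edges_subset cut by blast
    show "\<exists>V1 V2. V1 \<union> V2 = ?V \<and> V1 \<inter> V2 = {} \<and> V1 \<noteq> {} \<and> V2 \<noteq> {} \<and>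
        D = {e \<in> ?E. e \<inter> V1 \<noteq> {} \<and> e \<inter> V2 \<noteq> {}}"
      by (intro exI[of _ B] exI[of _ W] conjI part ne between)
    have "B \<noteq> W" using part(2) ne(1) by blast
    then show "\<exists>B W. B \<noteq> W \<and> components ?V (?E - D) = {B, W} \<and>
        (\<forall>e\<in>D. \<exists>b w. e = {b, w} \<and> b \<in> B \<and> w \<in> W \<and> black b \<and> \<not> black w)"
      using colours by (intro exI[of _ B] exI[of _ W] conjI comps ballI)
  qed
qed

lemma e_cut_components:
  assumes "e_cut S D"
  obtains B W where "components (hs_verts S) (hs_edges S - D) = {B, W}" "B \<inter> W = {}"
    "cut_edges (hs_edges S) (\<lambda>v. v \<in> B) = D"
    "\<forall>e\<in>D. \<exists>b w. e = {b, w} \<and> b \<in> B \<and> w \<in> W \<and> black b \<and> \<not> black w"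
proof -
  let ?V = "hs_verts S" and ?E = "hs_edges S"
  have D: "D \<subseteq> ?E" using assms unfolding e_cut_def by blast
  obtain B W where BW: "components ?V (?E - D) = {B, W}" "B \<noteq> W"
    and col: "\<forall>e\<in>D. \<exists>b w. e = {b, w} \<and> b \<in> B \<and> w \<in> W \<and> black b \<and> \<not> black w"
    using assms unfolding e_cut_def by (elim conjE exE) blast
  have "B \<in> components ?V (?E - D)" "W \<in> components ?V (?E - D)" using BW(1) by simp_all
  then have disj: "B \<inter> W = {}" using BW(2) by (rule components_disjoint)
  obtain v where B: "B = component_of (?E - D) ?V v"
    using BW(1) unfolding components_eq_image by (metis imageE insertI1)
  have "cut_edges ?E (\<lambda>v. v \<in> B) \<subseteq> D"
    unfolding B using hs_edge_subset_verts by (intro cut_edges_component_subset) blast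
  moreover have "D \<subseteq> cut_edges ?E (\<lambda>v. v \<in> B)"
  proof
    fix e assume e: "e \<in> D"
    then obtain b w where "e = {b, w}" "b \<in> B" "w \<in> W" using col by blast
    with disj D e show "e \<in> cut_edges ?E (\<lambda>v. v \<in> B)"
      by (auto simp: doubleton_in_cut_edges_iff)
  qed
  ultimately have "cut_edges ?E (\<lambda>v. v \<in> B) = D" by (rule antisym)
  from that[OF BW(1) disj this col] show thesis .
qed

lemma e_cut_minimal_even:
  assumes hs: "hexagonal_system S" and ec: "e_cut S D"
  shows "minimal_even (dual_ends S) D"
proof -
  let ?V = "hs_verts S" and ?E = "hs_edges S"
  obtain B W where comps: "components ?V (?E - D) = {B, W}" "B \<inter> W = {}"
    and cut: "cut_edges ?E (\<lambda>v. v \<in> B) = D"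
    and col: "\<forall>e\<in>D. \<exists>b w. e = {b, w} \<and> b \<in> B \<and> w \<in> W \<and> black b \<and> \<not> black w"
    by (rule e_cut_components[OF ec])
  have BW: "B \<in> components ?V (?E - D)" "W \<in> components ?V (?E - D)" using comps(1) by simp_all
  from BW obtain x y where x: "x \<in> ?V" "B = component_of (?E - D) ?V x"
    and y: "y \<in> ?V" "W = component_of (?E - D) ?V y" unfolding components_eq_image by blast
  have "x \<in> B" using mem_component_of_self[OF x(1)] x(2) by simp
  moreover have "y \<notin> B" using mem_component_of_self[OF y(1)] y(2) comps(2) by blast
  ultimately have "cut_edges ?E (\<lambda>v. v \<in> B) \<noteq> {}"
    by (intro cut_edges_nonempty[OF hs x(1) y(1)]) simp
  then have "D \<noteq> {}" using cut by simp
  moreover have "even_subgraph (dual_ends S) D"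
    using cut_edges_even_dual[OF hexagonal_system_finite_verts[OF hs], of "\<lambda>v. v \<in> B"]
    unfolding cut .
  moreover have "D' = D" if D': "D' \<subseteq> D" "D' \<noteq> {}" "even_subgraph (dual_ends S) D'" for D'
  proof -
    have DE: "D \<subseteq> ?E" using cut_edges_subset[of ?E "\<lambda>v. v \<in> B"] unfolding cut .
    with D'(1) have "D' \<subseteq> ?E" by (rule subset_trans)
    then obtain q where q: "cut_edges ?E q = D'" by (rule even_dual_set_is_cut[OF hs _ D'(3)])
    have "\<forall>e\<in>D. \<exists>b w. e = {b, w} \<and> b \<in> B \<and> w \<in> W" using col by blast
    from cut_edges_across_two_components[OF BW this DE, where q = q] show ?thesis
      using D'(1,2) unfolding q by blast
  qed
  ultimately show ?thesis unfolding minimal_even_def by blast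
qed

lemma e_cut_imp_dual_cycle_side:
  assumes hs: "hexagonal_system S" and D: "D \<subseteq> hs_edges S" and ec: "e_cut S D"
  shows "dual_cycle S D \<and> (\<exists>side. side_function S D side \<and>
           (\<forall>u\<in>\<Union>D. \<forall>v\<in>\<Union>D. side u \<longrightarrow> side v \<longrightarrow> black u = black v))"
proof -
  obtain B W where disj: "B \<inter> W = {}"
    and cut: "cut_edges (hs_edges S) (\<lambda>v. v \<in> B) = D"
    and col: "\<forall>e\<in>D. \<exists>b w. e = {b, w} \<and> b \<in> B \<and> w \<in> W \<and> black b \<and> \<not> black w"
    by (rule e_cut_components[OF ec])
  have "black u" if u: "u \<in> \<Union>D" "u \<in> B" for u
  proof -
    obtain e where "e \<in> D" "u \<in> e" using u(1) by blast
    moreover obtain b w where "e = {b, w}" "w \<in> W" "black b" using col \<open>e \<in> D\<close> by blast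
    ultimately show ?thesis using u(2) disj by blast
  qed
  then have col_side: "\<forall>u\<in>\<Union>D. \<forall>v\<in>\<Union>D. u \<in> B \<longrightarrow> v \<in> B \<longrightarrow> black u = black v" by blast
  have "side_function S D (\<lambda>v. v \<in> B)" using side_function_iff_cut_edges[OF D] cut by simp
  moreover have "is_cycle (dual_ends S) D"
  proof -
    have "\<forall>e\<in>D. card (dual_ends S e) = 2" using D card_dual_ends by blast
    from is_cycle_iff_minimal_even[OF finite_hs_edges_subset[OF hs D] this]
    show ?thesis using e_cut_minimal_even[OF hs ec] by simp
  qed
  ultimately show ?thesis unfolding dual_cycle_iff_is_cycle using col_side by blast
qed

theorem mainTheorem2:
  assumes "hexagonal_system S"
    and "D \<subseteq> hs_edges S"
  shows "e_cut S D \<longleftrightarrow>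
           (dual_cycle S D \<and>
            (\<exists>side. side_function S D side \<and>
               (\<forall>u\<in>\<Union>D. \<forall>v\<in>\<Union>D. side u \<longrightarrow> side v \<longrightarrow> black u = black v)))"
proof -
  have "e_cut S D" if "dual_cycle S D" "side_function S D side"
    and "\<forall>u\<in>\<Union>D. \<forall>v\<in>\<Union>D. side u \<longrightarrow> side v \<longrightarrow> black u = black v" for side
  proof (rule e_cut_intro[OF assms(1) _ _ that(3)])
    show "cut_edges (hs_edges S) side = D"
      using that(2) side_function_iff_cut_edges[OF assms(2)] by simp
    show "is_cycle (dual_ends S) D" using that(1) dual_cycle_iff_is_cycle by simp
  qed
  then show ?thesis using e_cut_imp_dual_cycle_side[OF assms] by blast
qed

end
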